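(* Let $n \geq 2$, $m \geq 1$, and $r \in \{0,1, \dots, n-2\}$ be integers, let $\mathcal{X}_1, \dots, \mathcal{X}_m$ be vector spaces over a field $\mathbb{F}$, and for each $a \in \{1,\dots,n\}$ let $x_a = x_{a,1}\otimes\cdots\otimes x_{a,m}$ be a product vector (all $x_{a,j}\in\mathcal{X}_j$ non-zero). Suppose that: 1. For every index $j \in \{1,\dots,m\}$, $\dim \operatorname{span} \{ x_{a, j}: a \in \{1,\dots,n\}\} \geq 2$. 2. The vector $\sum_{a =1}^n x_a$ has tensor rank $r$, and for every subset $\Gamma \subset \{1,\dots,n\}$ with $r+1 \leq |\Gamma| \leq n-1$, the vector $\sum_{a \in \Gamma} x_a$ has tensor rank at least $r+1$. Then $n+r \geq m+2$.
   Context: A product vector in $\mathcal{X}_1\otimes\cdots\otimes\mathcal{X}_m$ is a vector $x_1\otimes\cdots\otimes x_m$ with all $x_j$ non-zero. The tensor rank of a non-zero vector $v$ is the smallest positive integer $r$ such that $v$ is a sum of $r$ product vectors; the tensor rank of the zero vector is $0$. *)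

theory Defs
  imports Complex_Main "HOL-Library.Function_Algebras"
begin

text \<open>Model: each space X_j is (a subspace of) the function space 'b => 'a over the field 'a.
  The tensor product X_1 (x) ... (x) X_m is realised inside the functions (nat => 'b) => 'a,
  where x_1 (x) ... (x) x_m is the function t |-> prod_{j=1..m} x_j (t j).
  This map from the algebraic tensor product is injective, so tensor rank is faithfully modelled.\<close>

definition fscale :: "'a::field \<Rightarrow> ('b \<Rightarrow> 'a) \<Rightarrow> ('b \<Rightarrow> 'a)" where
  "fscale c f = (\<lambda>x. c * f x)"

definition prod_vec :: "nat \<Rightarrow> (nat \<Rightarrow> 'b \<Rightarrow> 'a::field) \<Rightarrow> ((nat \<Rightarrow> 'b) \<Rightarrow> 'a)" where
  "prod_vec m x = (\<lambda>t. \<Prod>j\<in>{1..m}. x j (t j))"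

definition is_product_vector :: "nat \<Rightarrow> ((nat \<Rightarrow> 'b) \<Rightarrow> 'a::field) \<Rightarrow> bool" where
  "is_product_vector m v \<longleftrightarrow> (\<exists>x. (\<forall>j\<in>{1..m}. x j \<noteq> 0) \<and> v = prod_vec m x)"

definition tensor_rank :: "nat \<Rightarrow> ((nat \<Rightarrow> 'b) \<Rightarrow> 'a::field) \<Rightarrow> nat" where
  "tensor_rank m v = (LEAST r. \<exists>ys. (\<forall>i<r. is_product_vector m (ys i)) \<and> v = (\<Sum>i<r. ys i))"

end

theory Submission
  imports Defs
begin

text \<open>
  Write \<open>T = x\<^sub>1 + ... + x\<^sub>n\<close> as a sum of \<open>r\<close> product vectors \<open>y\<^sub>b\<close> and consider
  the \<open>n + r\<close> product vectors \<open>x\<^sub>1, ..., x\<^sub>n, -y\<^sub>1, ..., -y\<^sub>r\<close>. They sum to zero, so their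
  span has dimension at most \<open>n + r - 1\<close>. The rank hypotheses forbid any proper nonempty
  subfamily with zero sum, hence the family is connected: for every splitting into two
  nonempty parts the spans of the parts meet nontrivially.

  For a connected family of product vectors, replacing a tensor factor in which not all
  members are parallel by the constant 1 lowers the dimension of the span by at least one:
  a linear functional on that factor vanishes on some members but not on others, and the
  nontrivial intersection of the spans of the two groups is what is lost. Since by
  hypothesis every one of the \<open>m\<close> factors is non-parallel, the span has dimension at
  least \<open>m + 1\<close>, and \<open>m + 1 \<le> n + r - 1\<close>.
\<close>

interpretation fs: vector_space "fscale :: 'a::field \<Rightarrow> ('c \<Rightarrow> 'a) \<Rightarrow> ('c \<Rightarrow> 'a)"
  by unfold_locales (auto simp: fscale_def fun_eq_iff algebra_simps)

lemma fscale_apply: "fscale c f x = c * f x"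
  by (simp add: fscale_def)

section \<open>Dimension counting in function spaces\<close>

lemma independent_card_le_dim:
  fixes W :: "('c \<Rightarrow> 'a::field) set"
  assumes "finite W" "fs.independent B" "B \<subseteq> fs.span W"
  shows "card B \<le> fs.dim W"
proof -
  obtain C where C: "C \<subseteq> W" "fs.independent C" "W \<subseteq> fs.span C" "card C = fs.dim W"
    by (rule fs.basis_exists)
  have "B \<subseteq> fs.span C"
    using assms(3) fs.span_minimal[OF C(3) fs.subspace_span] by blast
  moreover have "finite C"
    using C(1) assms(1) by (rule finite_subset)
  ultimately show ?thesis
    using fs.independent_span_bound[of C B] assms(2) C(4) by simp
qed

lemma dim_union_le:
  fixes A B :: "('c \<Rightarrow> 'a::field) set"
  assumes "finite A" "finite B" and "T \<noteq> 0" "T \<in> fs.span A" "T \<in> fs.span B"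
  shows "fs.dim (A \<union> B) + 1 \<le> fs.dim A + fs.dim B"
proof -
  have basis_through_T: "\<exists>D. T \<in> D \<and> finite D \<and> V \<subseteq> fs.span D \<and> card D = fs.dim V"
    if "finite V" "T \<in> fs.span V" for V
  proof -
    obtain D where D: "{T} \<subseteq> D" "D \<subseteq> insert T V" "fs.independent D" "insert T V \<subseteq> fs.span D"
      using fs.maximal_independent_subset_extend[of "{T}" "insert T V"] \<open>T \<noteq> 0\<close> by auto
    have "card D = fs.dim (insert T V)"
      by (rule fs.basis_card_eq_dim) (use D in auto)
    also have "\<dots> = fs.dim V"
      by (rule fs.span_eq_dim, rule fs.span_redundant) fact
    finally show ?thesis
      using D rev_finite_subset[of "insert T V" D] that(1) by auto
  qed
  obtain DA where DA: "T \<in> DA" "finite DA" "A \<subseteq> fs.span DA" "card DA = fs.dim A"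
    using basis_through_T assms by blast
  obtain DB where DB: "T \<in> DB" "finite DB" "B \<subseteq> fs.span DB" "card DB = fs.dim B"
    using basis_through_T assms by blast
  have "A \<union> B \<subseteq> fs.span (DA \<union> DB)"
    using DA(3) DB(3) fs.span_mono[of DA "DA \<union> DB"] fs.span_mono[of DB "DA \<union> DB"] by blast
  then have "fs.dim (A \<union> B) \<le> card (DA \<union> DB)"
    using DA(2) DB(2) by (simp add: fs.dim_le_card)
  moreover have "card (DA \<union> DB) + card (DA \<inter> DB) = card DA + card DB"
    using card_Un_Int[OF DA(2) DB(2)] by simp
  moreover have "card (DA \<inter> DB) \<ge> 1"
    using DA(1,2) DB(1) by (auto simp: Suc_le_eq card_gt_0_iff)
  ultimately show ?thesis
    using DA(4) DB(4) by linarith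
qed

lemma dim_image_add_dim_kernel_le:
  fixes W :: "('c \<Rightarrow> 'a::field) set"
  assumes "Vector_Spaces.linear fscale fscale \<Phi>" and "finite W"
    and "P \<subseteq> W" "\<forall>p\<in>P. \<Phi> p = 0" and "Q \<subseteq> \<Phi> ` fs.span W"
  shows "fs.dim Q + fs.dim P \<le> fs.dim W"
proof -
  interpret \<Phi>: Vector_Spaces.linear fscale fscale \<Phi> by fact
  obtain C where C: "C \<subseteq> P" "fs.independent C" "P \<subseteq> fs.span C" "card C = fs.dim P"
    by (rule fs.basis_exists)
  obtain D where D: "C \<subseteq> D" "D \<subseteq> W" "fs.independent D" "W \<subseteq> fs.span D"
    using fs.maximal_independent_subset_extend[of C W] C(1,2) assms(3) by blast
  have "finite D"
    using D(2) assms(2) by (rule finite_subset)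
  have "fs.span W \<subseteq> fs.span D"
    using D(4) by (rule fs.span_minimal[OF _ fs.subspace_span])
  then have "\<Phi> ` fs.span W \<subseteq> fs.span (\<Phi> ` D)"
    by (auto simp: \<Phi>.span_image)
  also have "\<dots> \<subseteq> fs.span (\<Phi> ` (D - C))"
  proof -
    have "\<Phi> ` D \<subseteq> insert 0 (\<Phi> ` (D - C))"
      using C(1) assms(4) by auto
    then show ?thesis
      using fs.span_mono[of "\<Phi> ` D" "insert 0 (\<Phi> ` (D - C))"] by simp
  qed
  finally have "fs.dim Q \<le> card (\<Phi> ` (D - C))"
    using assms(5) \<open>finite D\<close> by (intro fs.dim_le_card) auto
  also have "\<dots> \<le> card D - card C"
    using card_image_le[of "D - C" \<Phi>] card_Diff_subset[OF rev_finite_subset[OF \<open>finite D\<close> D(1)] D(1)]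
      \<open>finite D\<close> by simp
  finally show ?thesis
    using fs.basis_card_eq_dim[OF D(2,4,3)] C(4) card_mono[OF \<open>finite D\<close> D(1)] by linarith
qed

section \<open>Slices of product vectors\<close>

definition slice :: "nat \<Rightarrow> 'b \<Rightarrow> ((nat \<Rightarrow> 'b) \<Rightarrow> 'a) \<Rightarrow> ((nat \<Rightarrow> 'b) \<Rightarrow> 'a)" where
  "slice j \<beta> T = (\<lambda>t. T (t(j := \<beta>)))"

lemma linear_slice: "Vector_Spaces.linear fscale fscale (slice j \<beta> :: ((nat \<Rightarrow> 'b) \<Rightarrow> 'a::field) \<Rightarrow> _)"
  by unfold_locales (auto simp: slice_def fscale_def fun_eq_iff algebra_simps)

lemma eq_0_if_slices_eq_0:
  assumes "\<And>\<beta>. slice j \<beta> T = 0"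
  shows "T = 0"
proof
  fix t
  have "slice j (t j) T t = 0"
    using assms by simp
  then show "T t = 0 t"
    by (simp add: slice_def)
qed

lemma prod_vec_factor_out:
  assumes "j \<in> {1..m}"
  shows "prod_vec m X t = X j (t j) * prod_vec m (X(j := (\<lambda>_. 1))) t"
proof -
  have "prod_vec m (X(j := (\<lambda>_. 1))) t = (\<Prod>k\<in>{1..m} - {j}. X k (t k))"
    unfolding prod_vec_def using assms by (subst prod.remove[of _ j]) auto
  then show ?thesis
    unfolding prod_vec_def using assms by (simp add: prod.remove[of _ j])
qed

lemma prod_vec_unit_factor_ignores_arg:
  "prod_vec m (X(j := (\<lambda>_. 1))) (t(j := \<beta>)) = prod_vec m (X(j := (\<lambda>_. 1))) t"
  unfolding prod_vec_def by (rule prod.cong) auto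

lemma slice_prod_vec:
  assumes "j \<in> {1..m}"
  shows "slice j \<beta> (prod_vec m X) = fscale (X j \<beta>) (prod_vec m (X(j := (\<lambda>_. 1))))"
proof
  fix t
  have "slice j \<beta> (prod_vec m X) t = X j \<beta> * prod_vec m (X(j := (\<lambda>_. 1))) (t(j := \<beta>))"
    unfolding slice_def using prod_vec_factor_out[OF assms, of X "t(j := \<beta>)"] by simp
  then show "slice j \<beta> (prod_vec m X) t = fscale (X j \<beta>) (prod_vec m (X(j := (\<lambda>_. 1)))) t"
    by (simp add: prod_vec_unit_factor_ignores_arg fscale_apply)
qed

lemma prod_vec_neq_0:
  assumes "\<forall>k\<in>{1..m}. X k \<noteq> 0"
  shows "prod_vec m X \<noteq> 0"
proof -
  have "\<forall>k\<in>{1..m}. \<exists>\<beta>. X k \<beta> \<noteq> 0"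
    using assms by (auto simp: fun_eq_iff)
  then obtain t where "\<forall>k\<in>{1..m}. X k (t k) \<noteq> 0"
    by metis
  then have "prod_vec m X t \<noteq> 0"
    by (simp add: prod_vec_def)
  then show ?thesis
    by auto
qed

lemma is_product_vector_uminus:
  assumes "m \<ge> 1" and "is_product_vector m v"
  shows "is_product_vector m (- v)"
proof -
  obtain X where X: "\<forall>k\<in>{1..m}. X k \<noteq> 0" "v = prod_vec m X"
    using assms(2) unfolding is_product_vector_def by blast
  define X' where "X' = X(1 := fscale (-1) (X 1))"
  have one: "1 \<in> {1..m}"
    using assms(1) by simp
  have "prod_vec m X' t = - prod_vec m X t" for t
    using prod_vec_factor_out[OF one, of X' t] prod_vec_factor_out[OF one, of X t]
    by (simp add: X'_def fscale_apply)
  then have "prod_vec m X' = - prod_vec m X"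
    by (simp add: fun_eq_iff)
  moreover have "\<forall>k\<in>{1..m}. X' k \<noteq> 0"
    using X(1) by (auto simp: X'_def fscale_def fun_eq_iff)
  ultimately show ?thesis
    unfolding is_product_vector_def X(2) by metis
qed

section \<open>Connected families of product vectors\<close>

definition parallel :: "('c \<Rightarrow> 'a::field) \<Rightarrow> ('c \<Rightarrow> 'a) \<Rightarrow> bool" where
  "parallel f g \<longleftrightarrow> (\<exists>c. f = fscale c g)"

lemma parallel_refl [simp]: "parallel f f"
  unfolding parallel_def by (rule exI[of _ 1]) (simp add: fscale_def)

definition nonparallel_factors :: "nat \<Rightarrow> 'i set \<Rightarrow> ('i \<Rightarrow> nat \<Rightarrow> 'b \<Rightarrow> 'a::field) \<Rightarrow> nat set" where
  "nonparallel_factors m S X = {j \<in> {1..m}. \<exists>a\<in>S. \<exists>b\<in>S. \<not> parallel (X a j) (X b j)}"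

definition span_connected :: "'i set \<Rightarrow> ('i \<Rightarrow> 'c \<Rightarrow> 'a::field) \<Rightarrow> bool" where
  "span_connected S u \<longleftrightarrow> (\<forall>I. I \<subseteq> S \<longrightarrow> I \<noteq> {} \<longrightarrow> I \<noteq> S \<longrightarrow>
      (\<exists>T. T \<noteq> 0 \<and> T \<in> fs.span (u ` I) \<and> T \<in> fs.span (u ` (S - I))))"

lemma not_parallel_witness:
  fixes f g :: "'c \<Rightarrow> 'a::field"
  assumes "g \<noteq> 0" "\<not> parallel f g"
  obtains \<beta>1 \<beta>2 where "f \<beta>2 * g \<beta>1 \<noteq> f \<beta>1 * g \<beta>2"
proof -
  obtain \<beta>1 where "g \<beta>1 \<noteq> 0"
    using assms(1) by (auto simp: fun_eq_iff)
  moreover have "f \<noteq> fscale (f \<beta>1 / g \<beta>1) g"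
    using assms(2) unfolding parallel_def by blast
  then obtain \<beta>2 where "f \<beta>2 \<noteq> f \<beta>1 / g \<beta>1 * g \<beta>2"
    by (auto simp: fun_eq_iff fscale_apply)
  ultimately show ?thesis
    using that by (auto simp: field_simps)
qed

lemma exists_not_parallel_if_two_le_dim:
  fixes f :: "'i \<Rightarrow> 'c \<Rightarrow> 'a::field"
  assumes "2 \<le> fs.dim (fs.span (f ` N))"
  shows "\<exists>a\<in>N. \<exists>b\<in>N. \<not> parallel (f a) (f b)"
proof (rule ccontr)
  assume all_parallel: "\<not> ?thesis"
  have "fs.dim ({} :: ('c \<Rightarrow> 'a) set) = 0"
    using fs.dim_eq_card_independent[OF fs.independent_empty] by simp
  then have "N \<noteq> {}"
    using assms by auto
  then obtain c where "c \<in> N"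
    by blast
  have "f a \<in> fs.span {f c}" if "a \<in> N" for a
  proof -
    obtain s where "f a = fscale s (f c)"
      using all_parallel \<open>a \<in> N\<close> \<open>c \<in> N\<close> unfolding parallel_def by blast
    then show ?thesis
      by (simp add: fs.span_base fs.span_scale)
  qed
  then have "f ` N \<subseteq> fs.span {f c}"
    by blast
  then have "fs.dim (f ` N) \<le> 1"
    using fs.dim_le_card[of "f ` N" "{f c}"] by simp
  with assms show False
    by simp
qed

lemma nonparallel_factors_eq_if_two_le_dim:
  fixes X :: "'i \<Rightarrow> nat \<Rightarrow> 'b \<Rightarrow> 'a::field" and g :: "'j \<Rightarrow> 'i"
  assumes "g ` N \<subseteq> S" and "\<forall>j\<in>{1..m}. 2 \<le> fs.dim (fs.span ((\<lambda>a. X (g a) j) ` N))"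
  shows "nonparallel_factors m S X = {1..m}"
proof -
  have "j \<in> nonparallel_factors m S X" if j: "j \<in> {1..m}" for j
  proof -
    obtain a b where "a \<in> N" "b \<in> N" "\<not> parallel (X (g a) j) (X (g b) j)"
      using exists_not_parallel_if_two_le_dim[of "\<lambda>a. X (g a) j" N] assms(2) j by blast
    then show ?thesis
      using assms(1) j unfolding nonparallel_factors_def by blast
  qed
  then show ?thesis
    unfolding nonparallel_factors_def by blast
qed

lemma slice_span_prod_vec:
  fixes X :: "'i \<Rightarrow> nat \<Rightarrow> 'b \<Rightarrow> 'a::field"
  assumes "j \<in> {1..m}" and "T \<in> fs.span ((\<lambda>i. prod_vec m (X i)) ` I)"
  shows "slice j \<beta> T \<in> fs.span ((\<lambda>i. prod_vec m ((X i)(j := (\<lambda>_. 1)))) ` I)"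
proof -
  interpret slice: Vector_Spaces.linear fscale fscale "slice j \<beta> :: ((nat \<Rightarrow> 'b) \<Rightarrow> 'a) \<Rightarrow> _"
    by (rule linear_slice)
  have "slice j \<beta> (prod_vec m (X i)) \<in> fs.span ((\<lambda>i. prod_vec m ((X i)(j := (\<lambda>_. 1)))) ` I)"
    if "i \<in> I" for i
    unfolding slice_prod_vec[OF assms(1)] using that by (intro fs.span_scale fs.span_base) simp
  then have "slice j \<beta> ` (\<lambda>i. prod_vec m (X i)) ` I \<subseteq> fs.span ((\<lambda>i. prod_vec m ((X i)(j := (\<lambda>_. 1)))) ` I)"
    by blast
  then have "fs.span (slice j \<beta> ` (\<lambda>i. prod_vec m (X i)) ` I)
      \<subseteq> fs.span ((\<lambda>i. prod_vec m ((X i)(j := (\<lambda>_. 1)))) ` I)"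
    by (rule fs.span_minimal[OF _ fs.subspace_span])
  then show ?thesis
    using assms(2) slice.span_image by blast
qed

lemma span_connected_drop_factor:
  fixes X :: "'i \<Rightarrow> nat \<Rightarrow> 'b \<Rightarrow> 'a::field"
  assumes "j \<in> {1..m}" and "span_connected S (\<lambda>i. prod_vec m (X i))"
  shows "span_connected S (\<lambda>i. prod_vec m ((X i)(j := (\<lambda>_. 1))))"
  unfolding span_connected_def
proof (intro allI impI)
  fix I assume "I \<subseteq> S" "I \<noteq> {}" "I \<noteq> S"
  then obtain T where T: "T \<noteq> 0" "T \<in> fs.span ((\<lambda>i. prod_vec m (X i)) ` I)"
    "T \<in> fs.span ((\<lambda>i. prod_vec m (X i)) ` (S - I))"
    using assms(2) unfolding span_connected_def by blast
  obtain \<beta> where "slice j \<beta> T \<noteq> 0"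
    using eq_0_if_slices_eq_0[of j T] T(1) by auto
  then show "\<exists>T. T \<noteq> 0 \<and> T \<in> fs.span ((\<lambda>i. prod_vec m ((X i)(j := (\<lambda>_. 1)))) ` I) \<and>
      T \<in> fs.span ((\<lambda>i. prod_vec m ((X i)(j := (\<lambda>_. 1)))) ` (S - I))"
    using slice_span_prod_vec[OF assms(1) T(2), of \<beta>] slice_span_prod_vec[OF assms(1) T(3), of \<beta>] by blast
qed

lemma independent_lift_by_slices:
  fixes B :: "((nat \<Rightarrow> 'b) \<Rightarrow> 'a::field) set"
  assumes "finite B" "fs.independent B"
    and slice_L: "\<And>b \<beta>. b \<in> B \<Longrightarrow> slice j \<beta> (L b) = fscale (c b \<beta>) b"
    and nonzero_at: "\<And>b. b \<in> B \<Longrightarrow> \<exists>\<beta>. c b \<beta> \<noteq> 0"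
  shows "inj_on L B" and "fs.independent (L ` B)"
proof -
  interpret slice: Vector_Spaces.linear fscale fscale "slice j \<beta> :: ((nat \<Rightarrow> 'b) \<Rightarrow> 'a) \<Rightarrow> _" for \<beta>
    by (rule linear_slice)
  show "inj_on L B"
  proof (rule inj_onI, rule ccontr)
    fix b b' assume b: "b \<in> B" "b' \<in> B" "L b = L b'" "b \<noteq> b'"
    obtain \<beta> where \<beta>: "c b \<beta> \<noteq> 0"
      using nonzero_at[OF b(1)] by blast
    have "fscale (c b \<beta>) b = fscale (c b' \<beta>) b'"
      using slice_L[OF b(1), of \<beta>] slice_L[OF b(2), of \<beta>] b(3) by simp
    then have "b = fscale (c b' \<beta> / c b \<beta>) b'"
      using \<beta> by (auto simp: fscale_def fun_eq_iff field_simps)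
    also have "\<dots> \<in> fs.span (B - {b})"
      using b(2,4) by (intro fs.span_scale fs.span_base) simp
    finally show False
      using assms(2) b(1) unfolding fs.dependent_def by blast
  qed
  show "fs.independent (L ` B)"
  proof (rule fs.independent_if_scalars_zero)
    show "finite (L ` B)"
      using assms(1) by simp
  next
    fix f v assume sum_0: "(\<Sum>v\<in>L ` B. fscale (f v) v) = 0" and "v \<in> L ` B"
    then obtain b where b: "b \<in> B" "v = L b"
      by blast
    obtain \<beta> where \<beta>: "c b \<beta> \<noteq> 0"
      using nonzero_at[OF b(1)] by blast
    have "0 = slice j \<beta> (\<Sum>b\<in>B. fscale (f (L b)) (L b))"
      using sum_0 by (simp add: sum.reindex[OF \<open>inj_on L B\<close>])
    also have "\<dots> = (\<Sum>b\<in>B. fscale (f (L b)) (slice j \<beta> (L b)))"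
      by (simp add: slice.sum slice.scale)
    also have "\<dots> = (\<Sum>b\<in>B. fscale (f (L b) * c b \<beta>) b)"
      by (rule sum.cong) (simp_all add: slice_L fscale_def mult.assoc)
    finally have "f (L b) * c b \<beta> = 0"
      using fs.independentD[OF assms(2,1) subset_refl, of "\<lambda>b. f (L b) * c b \<beta>"] b(1) by simp
    then show "f v = 0"
      using \<beta> b(2) by simp
  qed
qed

lemma dim_drop_factor_le:
  fixes X :: "'i \<Rightarrow> nat \<Rightarrow> 'b \<Rightarrow> 'a::field"
  assumes "j \<in> {1..m}" "finite K" "\<forall>i\<in>K. X i j \<noteq> 0"
  shows "fs.dim ((\<lambda>i. prod_vec m ((X i)(j := (\<lambda>_. 1)))) ` K) \<le> fs.dim ((\<lambda>i. prod_vec m (X i)) ` K)"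
proof -
  define v where "v i = prod_vec m ((X i)(j := (\<lambda>_. 1)))" for i
  define w where "w i = prod_vec m (X i)" for i
  obtain B where B: "B \<subseteq> v ` K" "fs.independent B" "v ` K \<subseteq> fs.span B" "card B = fs.dim (v ` K)"
    by (rule fs.basis_exists)
  have "finite B"
    using B(1) assms(2) by (simp add: finite_subset)
  have "\<forall>b\<in>B. \<exists>i. i \<in> K \<and> v i = b"
    using B(1) by blast
  then obtain k where k: "\<forall>b\<in>B. k b \<in> K \<and> v (k b) = b"
    by metis
  have slice_w: "slice j \<beta> (w (k b)) = fscale (X (k b) j \<beta>) b" if "b \<in> B" for b \<beta>
    using k that unfolding w_def v_def by (simp add: slice_prod_vec[OF assms(1)])
  have nonzero: "\<exists>\<beta>. X (k b) j \<beta> \<noteq> 0" if "b \<in> B" for b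
    using assms(3) k that by (auto simp: fun_eq_iff)
  note lift = independent_lift_by_slices[OF \<open>finite B\<close> B(2) slice_w nonzero]
  have "(\<lambda>b. w (k b)) ` B \<subseteq> fs.span (w ` K)"
    using k by (auto intro: fs.span_base)
  then have "card ((\<lambda>b. w (k b)) ` B) \<le> fs.dim (w ` K)"
    using assms(2) lift(2) by (intro independent_card_le_dim) auto
  then show ?thesis
    using card_image[OF lift(1)] B(4) unfolding v_def w_def by simp
qed

lemma dim_drop_factor_add_dim_kernel_le:
  fixes X :: "'i \<Rightarrow> nat \<Rightarrow> 'b \<Rightarrow> 'a::field" and c d :: 'a and \<beta> \<gamma> :: 'b
  assumes "j \<in> {1..m}" "finite S"
  defines "K \<equiv> {i \<in> S. c * X i j \<beta> - d * X i j \<gamma> = 0}"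
  shows "fs.dim ((\<lambda>i. prod_vec m ((X i)(j := (\<lambda>_. 1)))) ` (S - K)) + fs.dim ((\<lambda>i. prod_vec m (X i)) ` K)
    \<le> fs.dim ((\<lambda>i. prod_vec m (X i)) ` S)"
proof -
  define v where "v i = prod_vec m ((X i)(j := (\<lambda>_. 1)))" for i
  define w where "w i = prod_vec m (X i)" for i
  define \<phi> where "\<phi> i = c * X i j \<beta> - d * X i j \<gamma>" for i
  define \<Phi> where "\<Phi> T = fscale c (slice j \<beta> T) - fscale d (slice j \<gamma> T)"
    for T :: "(nat \<Rightarrow> 'b) \<Rightarrow> 'a"
  have "Vector_Spaces.linear fscale fscale \<Phi>"
    unfolding \<Phi>_def by unfold_locales (auto simp: slice_def fscale_def fun_eq_iff algebra_simps)
  then interpret \<Phi>: Vector_Spaces.linear fscale fscale \<Phi> .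
  have \<Phi>_w: "\<Phi> (w i) = fscale (\<phi> i) (v i)" for i
    unfolding \<Phi>_def \<phi>_def v_def w_def slice_prod_vec[OF assms(1)]
    by (simp add: fscale_def fun_eq_iff algebra_simps)
  have "v ` (S - K) \<subseteq> \<Phi> ` fs.span (w ` S)"
  proof
    fix u assume "u \<in> v ` (S - K)"
    then obtain i where i: "i \<in> S" "\<phi> i \<noteq> 0" "u = v i"
      unfolding K_def \<phi>_def by blast
    have "\<Phi> (fscale (1 / \<phi> i) (w i)) = fscale (1 / \<phi> i) (fscale (\<phi> i) (v i))"
      by (simp only: \<Phi>.scale \<Phi>_w)
    also have "\<dots> = u"
      using i(2,3) by (simp add: fscale_def)
    finally have "\<Phi> (fscale (1 / \<phi> i) (w i)) = u" .
    moreover have "fscale (1 / \<phi> i) (w i) \<in> fs.span (w ` S)"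
      using i(1) by (intro fs.span_scale fs.span_base) simp
    ultimately show "u \<in> \<Phi> ` fs.span (w ` S)"
      by blast
  qed
  moreover have "\<forall>p\<in>w ` K. \<Phi> p = 0"
    by (auto simp: K_def \<Phi>_w \<phi>_def fscale_def fun_eq_iff)
  ultimately show ?thesis
    using dim_image_add_dim_kernel_le[OF \<Phi>.linear_axioms, of "w ` S" "w ` K" "v ` (S - K)"] assms(2)
    unfolding v_def w_def K_def by auto
qed

lemma dim_drop_nonparallel_factor:
  fixes X :: "'i \<Rightarrow> nat \<Rightarrow> 'b \<Rightarrow> 'a::field"
  assumes "finite S" "j \<in> {1..m}" "\<forall>i\<in>S. X i j \<noteq> 0"
    and "a \<in> S" "b \<in> S" "\<not> parallel (X a j) (X b j)"
    and "span_connected S (\<lambda>i. prod_vec m ((X i)(j := (\<lambda>_. 1))))"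
  shows "fs.dim ((\<lambda>i. prod_vec m ((X i)(j := (\<lambda>_. 1)))) ` S) < fs.dim ((\<lambda>i. prod_vec m (X i)) ` S)"
proof -
  define v where "v i = prod_vec m ((X i)(j := (\<lambda>_. 1)))" for i
  define w where "w i = prod_vec m (X i)" for i
  obtain \<beta>1 \<beta>2 where \<beta>: "X a j \<beta>2 * X b j \<beta>1 \<noteq> X a j \<beta>1 * X b j \<beta>2"
    using not_parallel_witness assms(3,5,6) by metis
  \<comment> \<open>\<open>K\<close> is where the functional \<open>h \<mapsto> h\<^sub>a(\<beta>2) h(\<beta>1) - h\<^sub>a(\<beta>1) h(\<beta>2)\<close> kills the
    \<open>j\<close>-th factor; it contains \<open>a\<close> but not \<open>b\<close>, so connectivity applies to the split.\<close>
  define K where "K = {i \<in> S. X a j \<beta>2 * X i j \<beta>1 - X a j \<beta>1 * X i j \<beta>2 = 0}"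
  have "a \<in> K" "b \<notin> K" "K \<subseteq> S"
    using assms(4) \<beta> by (auto simp: K_def mult.commute)
  then have "S - K \<subseteq> S" "S - K \<noteq> {}" "S - K \<noteq> S" "S - (S - K) = K"
    using assms(5) by blast+
  then obtain T where T: "T \<noteq> 0" "T \<in> fs.span (v ` (S - K))" "T \<in> fs.span (v ` K)"
    using assms(7) unfolding span_connected_def v_def by metis
  have "v ` S = v ` (S - K) \<union> v ` K"
    using \<open>K \<subseteq> S\<close> by blast
  then have "fs.dim (v ` S) < fs.dim (v ` (S - K)) + fs.dim (v ` K)"
    using dim_union_le[OF _ _ T] assms(1) \<open>K \<subseteq> S\<close> finite_subset by fastforce
  also have "\<dots> \<le> fs.dim (v ` (S - K)) + fs.dim (w ` K)"
    using dim_drop_factor_le[OF assms(2), of K X] assms(1,3) \<open>K \<subseteq> S\<close>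
    unfolding v_def w_def by (auto intro: finite_subset)
  also have "\<dots> \<le> fs.dim (w ` S)"
    unfolding v_def w_def K_def
    by (rule dim_drop_factor_add_dim_kernel_le[OF assms(2,1),
          where c = "X a j \<beta>2" and d = "X a j \<beta>1" and \<beta> = \<beta>1 and \<gamma> = \<beta>2])
  finally show ?thesis
    unfolding v_def w_def .
qed

lemma card_nonparallel_factors_less_dim:
  fixes X :: "'i \<Rightarrow> nat \<Rightarrow> 'b \<Rightarrow> 'a::field"
  assumes "finite S" "S \<noteq> {}" "\<forall>i\<in>S. \<forall>k\<in>{1..m}. X i k \<noteq> 0"
    and "span_connected S (\<lambda>i. prod_vec m (X i))"
  shows "card (nonparallel_factors m S X) < fs.dim ((\<lambda>i. prod_vec m (X i)) ` S)"
  using assms(3,4)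
proof (induction "card (nonparallel_factors m S X)" arbitrary: X)
  case 0
  obtain i where "i \<in> S"
    using assms(2) by blast
  have "card {prod_vec m (X i)} \<le> fs.dim ((\<lambda>i. prod_vec m (X i)) ` S)"
  proof (rule independent_card_le_dim)
    show "fs.independent {prod_vec m (X i)}"
      using prod_vec_neq_0[of m "X i"] 0(2) \<open>i \<in> S\<close> by simp
    show "{prod_vec m (X i)} \<subseteq> fs.span ((\<lambda>i. prod_vec m (X i)) ` S)"
      using \<open>i \<in> S\<close> by (simp add: fs.span_base)
  qed (use assms(1) in simp)
  then show ?case
    using 0(1) by simp
next
  case (Suc n)
  then obtain j where j: "j \<in> nonparallel_factors m S X"
    by (metis card.empty ex_in_conv nat.distinct(1))
  then obtain a b where "j \<in> {1..m}" "a \<in> S" "b \<in> S" "\<not> parallel (X a j) (X b j)"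
    unfolding nonparallel_factors_def by blast
  define X' where "X' i = (X i)(j := (\<lambda>_. 1))" for i
  have "nonparallel_factors m S X' = nonparallel_factors m S X - {j}"
    unfolding nonparallel_factors_def X'_def by auto
  then have "n = card (nonparallel_factors m S X')"
    using Suc(2) j by simp
  moreover have "\<forall>i\<in>S. \<forall>k\<in>{1..m}. X' i k \<noteq> 0"
    using Suc(3) unfolding X'_def by (auto simp: fun_eq_iff)
  moreover have "span_connected S (\<lambda>i. prod_vec m (X' i))"
    unfolding X'_def by (rule span_connected_drop_factor[OF \<open>j \<in> {1..m}\<close> Suc(4)])
  ultimately have "n < fs.dim ((\<lambda>i. prod_vec m (X' i)) ` S)"
    using Suc(1) by metis
  moreover have "fs.dim ((\<lambda>i. prod_vec m (X' i)) ` S) < fs.dim ((\<lambda>i. prod_vec m (X i)) ` S)"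
    using dim_drop_nonparallel_factor[OF assms(1) \<open>j \<in> {1..m}\<close> _ \<open>a \<in> S\<close> \<open>b \<in> S\<close>]
      \<open>\<not> parallel (X a j) (X b j)\<close> \<open>j \<in> {1..m}\<close> Suc(3) \<open>span_connected S (\<lambda>i. prod_vec m (X' i))\<close>
    unfolding X'_def by blast
  ultimately show ?case
    using Suc(2) by linarith
qed

section \<open>Tensor rank\<close>

definition sum_of_products :: "nat \<Rightarrow> nat \<Rightarrow> ((nat \<Rightarrow> 'b) \<Rightarrow> 'a::field) \<Rightarrow> bool" where
  "sum_of_products m k v \<longleftrightarrow> (\<exists>ys. (\<forall>i<k. is_product_vector m (ys i)) \<and> v = (\<Sum>i<k. ys i))"

lemma tensor_rank_le: "sum_of_products m k v \<Longrightarrow> tensor_rank m v \<le> k"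
  unfolding tensor_rank_def sum_of_products_def by (rule Least_le)

lemma sum_of_products_tensor_rank: "sum_of_products m k v \<Longrightarrow> sum_of_products m (tensor_rank m v) v"
  unfolding tensor_rank_def sum_of_products_def by (rule LeastI_ex) blast

lemma sum_of_products_sum:
  assumes "finite F" "\<forall>i\<in>F. is_product_vector m (f i)"
  shows "sum_of_products m (card F) (\<Sum>i\<in>F. f i)"
proof -
  obtain h where h: "bij_betw h {..<card F} F"
    using ex_bij_betw_nat_finite[OF assms(1)] by (metis atLeast0LessThan)
  have "(\<Sum>i\<in>F. f i) = (\<Sum>i<card F. f (h i))"
    using sum.reindex_bij_betw[OF h, of f] by simp
  moreover have "\<forall>i<card F. is_product_vector m (f (h i))"
    using assms(2) bij_betwE[OF h] by blast
  ultimately show ?thesis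
    unfolding sum_of_products_def by (intro exI[of _ "\<lambda>i. f (h i)"]) simp
qed

lemma sum_of_products_add:
  assumes "sum_of_products m k u" "sum_of_products m l v"
  shows "sum_of_products m (k + l) (u + v)"
proof -
  obtain ys zs where
    ys: "\<forall>i<k. is_product_vector m (ys i)" "u = (\<Sum>i<k. ys i)" and
    zs: "\<forall>i<l. is_product_vector m (zs i)" "v = (\<Sum>i<l. zs i)"
    using assms unfolding sum_of_products_def by blast
  have "u + v = (\<Sum>i\<in>{..<k} <+> {..<l}. case_sum ys zs i)"
    using ys(2) zs(2) by (simp add: sum.Plus comp_def)
  moreover have "\<forall>i\<in>{..<k} <+> {..<l}. is_product_vector m (case_sum ys zs i)"
    using ys(1) zs(1) by auto
  ultimately show ?thesis
    using sum_of_products_sum[of "{..<k} <+> {..<l}" m "case_sum ys zs"] by (simp add: card_Plus)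
qed

lemma tensor_rank_subsum_ge:
  fixes P :: "'i \<Rightarrow> (nat \<Rightarrow> 'b) \<Rightarrow> 'a::field"
  assumes "finite N" "r + 2 \<le> card N" "\<forall>a\<in>N. is_product_vector m (P a)"
    and "\<forall>\<Gamma>. \<Gamma> \<subseteq> N \<and> r + 1 \<le> card \<Gamma> \<and> card \<Gamma> \<le> card N - 1 \<longrightarrow>
      r + 1 \<le> tensor_rank m (\<Sum>a\<in>\<Gamma>. P a)"
    and "A \<subseteq> N" "A \<noteq> N"
  shows "min (card A) (r + 1) \<le> tensor_rank m (\<Sum>a\<in>A. P a)"
proof -
  have "finite A"
    using assms(5,1) by (rule finite_subset)
  have "card A < card N"
    using assms(1,5,6) by (intro psubset_card_mono) auto
  show ?thesis
  proof (cases "r + 1 \<le> card A")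
    case True
    then have "r + 1 \<le> tensor_rank m (\<Sum>a\<in>A. P a)"
      using assms(4)[rule_format, of A] assms(5) \<open>card A < card N\<close> by simp
    then show ?thesis
      by simp
  next
    case False
    have "r + 1 - card A \<le> card (N - A)"
      using assms(2) card_Diff_subset[OF \<open>finite A\<close> assms(5)] by linarith
    then obtain S0 where S0: "S0 \<subseteq> N - A" "card S0 = r + 1 - card A" "finite S0"
      by (rule obtain_subset_with_card_n)
    define G where "G = A \<union> S0"
    have "A \<inter> S0 = {}"
      using S0(1) by blast
    then have G_split: "(\<Sum>a\<in>G. P a) = (\<Sum>a\<in>A. P a) + (\<Sum>a\<in>S0. P a)"
      using S0(3) \<open>finite A\<close> by (simp add: G_def sum.union_disjoint)
    have "card G = r + 1"
      using False S0 \<open>finite A\<close> \<open>A \<inter> S0 = {}\<close> by (simp add: G_def card_Un_disjoint)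
    moreover have "G \<subseteq> N"
      using assms(5) S0(1) by (auto simp: G_def)
    ultimately have "r + 1 \<le> tensor_rank m (\<Sum>a\<in>G. P a)"
      using assms(2) assms(4)[rule_format, of G] by simp
    also have "\<dots> \<le> tensor_rank m (\<Sum>a\<in>A. P a) + card S0"
    proof (rule tensor_rank_le)
      have "sum_of_products m (tensor_rank m (\<Sum>a\<in>A. P a)) (\<Sum>a\<in>A. P a)"
        using assms(3,5) \<open>finite A\<close> by (intro sum_of_products_tensor_rank[OF sum_of_products_sum]) auto
      moreover have "sum_of_products m (card S0) (\<Sum>a\<in>S0. P a)"
        using assms(3) S0(1,3) by (intro sum_of_products_sum) auto
      ultimately show "sum_of_products m (tensor_rank m (\<Sum>a\<in>A. P a) + card S0) (\<Sum>a\<in>G. P a)"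
        unfolding G_split by (rule sum_of_products_add)
    qed
    finally show ?thesis
      using False S0(2) by simp
  qed
qed

lemma minimal_decomposition_no_vanishing_subsum:
  assumes "\<forall>i<r. is_product_vector m (ys i)" "tensor_rank m (\<Sum>i<r. ys i) = r"
    and "B \<subseteq> {..<r}" "(\<Sum>i\<in>B. ys i) = 0"
  shows "B = {}"
proof -
  have "finite B"
    using assms(3) finite_subset by blast
  have "(\<Sum>i<r. ys i) = (\<Sum>i\<in>{..<r} - B. ys i)"
    using sum.subset_diff[OF assms(3), of ys] assms(4) by simp
  moreover have "sum_of_products m (card ({..<r} - B)) (\<Sum>i\<in>{..<r} - B. ys i)"
    using assms(1) by (intro sum_of_products_sum) auto
  ultimately have "r \<le> card ({..<r} - B)"
    using assms(2) tensor_rank_le by metis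
  then have "card B = 0"
    using card_Diff_subset[OF \<open>finite B\<close> assms(3)] card_mono[OF _ assms(3)] by simp
  then show ?thesis
    using \<open>finite B\<close> by simp
qed

lemma no_vanishing_proper_subsum:
  fixes P ys :: "_ \<Rightarrow> (nat \<Rightarrow> 'b) \<Rightarrow> 'a::field"
  assumes "finite N" "r + 2 \<le> card N"
    and "\<forall>a\<in>N. is_product_vector m (P a)" "\<forall>i<r. is_product_vector m (ys i)"
    and "(\<Sum>a\<in>N. P a) = (\<Sum>i<r. ys i)" "tensor_rank m (\<Sum>a\<in>N. P a) = r"
    and "\<forall>\<Gamma>. \<Gamma> \<subseteq> N \<and> r + 1 \<le> card \<Gamma> \<and> card \<Gamma> \<le> card N - 1 \<longrightarrow>
      r + 1 \<le> tensor_rank m (\<Sum>a\<in>\<Gamma>. P a)"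
    and "A \<subseteq> N" "B \<subseteq> {..<r}" "(\<Sum>a\<in>A. P a) = (\<Sum>i\<in>B. ys i)"
  shows "(A = {} \<and> B = {}) \<or> (A = N \<and> B = {..<r})"
proof -
  have rank_ys: "tensor_rank m (\<Sum>i<r. ys i) = r"
    using assms(5,6) by simp
  have complement: "(\<Sum>a\<in>N - A. P a) = (\<Sum>i\<in>{..<r} - B. ys i)"
    using sum.subset_diff[OF assms(8,1), of P] sum.subset_diff[OF assms(9), of ys] assms(5,10) by simp
  have card_le: "card A' \<le> card B'"
    if "A' \<subseteq> N" "A' \<noteq> N" "B' \<subseteq> {..<r}" "(\<Sum>a\<in>A'. P a) = (\<Sum>i\<in>B'. ys i)" for A' B'
  proof -
    have "min (card A') (r + 1) \<le> tensor_rank m (\<Sum>a\<in>A'. P a)"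
      using tensor_rank_subsum_ge[OF assms(1,2,3,7) that(1,2)] .
    also have "\<dots> \<le> card B'"
      unfolding that(4) using assms(4) that(3) finite_subset
      by (intro tensor_rank_le sum_of_products_sum) auto
    finally show ?thesis
      using card_mono[OF _ that(3)] by simp
  qed
  consider "A = {}" | "A = N" | "A \<noteq> {}" "A \<noteq> N"
    by blast
  then show ?thesis
  proof cases
    case 1
    then show ?thesis
      using minimal_decomposition_no_vanishing_subsum[OF assms(4) rank_ys assms(9)] assms(10) by simp
  next
    case 2
    then have "{..<r} - B = {}"
      using minimal_decomposition_no_vanishing_subsum[OF assms(4) rank_ys, of "{..<r} - B"] complement
      by simp
    then show ?thesis
      using 2 assms(9) by blast
  next
    case 3
    have "card A \<le> card B"
      using card_le[OF assms(8) 3(2) assms(9,10)] .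
    moreover have "card (N - A) \<le> card ({..<r} - B)"
      using card_le[OF _ _ _ complement] 3(1) assms(8) by blast
    moreover have "card (N - A) = card N - card A"
      using card_Diff_subset[OF finite_subset[OF assms(8,1)] assms(8)] .
    moreover have "card ({..<r} - B) = r - card B"
      using card_Diff_subset[OF finite_subset[OF assms(9)] assms(9)] by simp
    moreover have "card A \<le> card N" "card B \<le> r"
      using card_mono[OF assms(1,8)] card_mono[OF _ assms(9)] by simp_all
    ultimately have False
      using assms(2) by linarith
    then show ?thesis ..
  qed
qed

section \<open>Zero-sum families\<close>

lemma Plus_vimage_Inl_Inr: "(Inl -` I) <+> (Inr -` I) = I"
proof (rule set_eqI)
  fix x :: "'a + 'b"
  show "x \<in> (Inl -` I) <+> (Inr -` I) \<longleftrightarrow> x \<in> I"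
    by (cases x) auto
qed

lemma sum_split_Inl_Inr:
  assumes "finite I"
  shows "sum f I = sum (f \<circ> Inl) (Inl -` I) + sum (f \<circ> Inr) (Inr -` I)"
proof -
  have "finite (Inl -` I)" "finite (Inr -` I)"
    using assms by (simp_all add: finite_vimageI)
  then show ?thesis
    using sum.Plus[of "Inl -` I" "Inr -` I" f] by (simp add: Plus_vimage_Inl_Inr)
qed

lemma span_connected_if_no_vanishing_proper_subsum:
  fixes u :: "'i \<Rightarrow> 'c \<Rightarrow> 'a::field"
  assumes "finite S" "(\<Sum>i\<in>S. u i) = 0" "\<forall>I\<subseteq>S. (\<Sum>i\<in>I. u i) = 0 \<longrightarrow> I = {} \<or> I = S"
  shows "span_connected S u"
  unfolding span_connected_def
proof (intro allI impI)
  fix I assume I: "I \<subseteq> S" "I \<noteq> {}" "I \<noteq> S"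
  have "(\<Sum>i\<in>I. u i) = - (\<Sum>i\<in>S - I. u i)"
    using sum.subset_diff[OF I(1) assms(1), of u] assms(2) by (simp add: eq_neg_iff_add_eq_0 add.commute)
  moreover have "(\<Sum>i\<in>S - I. u i) \<in> fs.span (u ` (S - I))" "(\<Sum>i\<in>I. u i) \<in> fs.span (u ` I)"
    by (intro fs.span_sum fs.span_base; simp)+
  moreover have "(\<Sum>i\<in>I. u i) \<noteq> 0"
    using assms(3) I by blast
  ultimately show "\<exists>T. T \<noteq> 0 \<and> T \<in> fs.span (u ` I) \<and> T \<in> fs.span (u ` (S - I))"
    using fs.span_neg by metis
qed

lemma dim_less_card_if_sum_eq_0:
  fixes u :: "'i \<Rightarrow> 'c \<Rightarrow> 'a::field"
  assumes "finite S" "s \<in> S" "(\<Sum>i\<in>S. u i) = 0"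
  shows "fs.dim (u ` S) < card S"
proof -
  have "u s = - (\<Sum>i\<in>S - {s}. u i)"
    using sum.remove[OF assms(1,2), of u] assms(3) by (simp add: eq_neg_iff_add_eq_0)
  then have "u s \<in> fs.span (u ` (S - {s}))"
    by (simp only:) (intro fs.span_neg fs.span_sum fs.span_base; simp)
  then have "u ` S \<subseteq> fs.span (u ` (S - {s}))"
    using fs.span_base[of _ "u ` (S - {s})"] by blast
  then have "fs.dim (u ` S) \<le> card (u ` (S - {s}))"
    using assms(1) by (simp add: fs.dim_le_card)
  also have "\<dots> \<le> card (S - {s})"
    using assms(1) by (simp add: card_image_le)
  also have "\<dots> < card S"
    using assms(1,2) by (rule card_Diff1_less)
  finally show ?thesis .
qed

lemma sum_signed_decomposition_eq_0:
  fixes u :: "'i + nat \<Rightarrow> 'c::ab_group_add"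
  assumes "finite N" "(\<Sum>a\<in>N. P a) = (\<Sum>i<r. ys i)"
    and "\<forall>a\<in>N. u (Inl a) = P a" "\<forall>i<r. u (Inr i) = - ys i"
  shows "(\<Sum>i\<in>N <+> {..<r}. u i) = 0"
proof -
  have "(\<Sum>i\<in>N <+> {..<r}. u i) = (\<Sum>a\<in>N. u (Inl a)) + (\<Sum>i<r. u (Inr i))"
    using sum.Plus[OF assms(1) finite_lessThan, of u] by (simp add: comp_def)
  also have "\<dots> = (\<Sum>a\<in>N. P a) - (\<Sum>i<r. ys i)"
    using assms(3,4) by (simp add: sum_negf)
  finally show ?thesis
    using assms(2) by simp
qed

lemma span_connected_signed_decomposition:
  fixes P ys :: "_ \<Rightarrow> (nat \<Rightarrow> 'b) \<Rightarrow> 'a::field"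
  assumes "finite N" "r + 2 \<le> card N"
    and "\<forall>a\<in>N. is_product_vector m (P a)" "\<forall>i<r. is_product_vector m (ys i)"
    and "(\<Sum>a\<in>N. P a) = (\<Sum>i<r. ys i)" "tensor_rank m (\<Sum>a\<in>N. P a) = r"
    and "\<forall>\<Gamma>. \<Gamma> \<subseteq> N \<and> r + 1 \<le> card \<Gamma> \<and> card \<Gamma> \<le> card N - 1 \<longrightarrow>
      r + 1 \<le> tensor_rank m (\<Sum>a\<in>\<Gamma>. P a)"
    and "\<forall>a\<in>N. u (Inl a) = P a" "\<forall>i<r. u (Inr i) = - ys i"
  shows "span_connected (N <+> {..<r}) u"
proof (rule span_connected_if_no_vanishing_proper_subsum)
  show "finite (N <+> {..<r})"
    using assms(1) by simp
  show "(\<Sum>i\<in>N <+> {..<r}. u i) = 0"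
    using sum_signed_decomposition_eq_0 assms(1,5,8,9) .
  show "\<forall>I\<subseteq>N <+> {..<r}. (\<Sum>i\<in>I. u i) = 0 \<longrightarrow> I = {} \<or> I = N <+> {..<r}"
  proof (intro allI impI)
    fix I assume I: "I \<subseteq> N <+> {..<r}" "(\<Sum>i\<in>I. u i) = 0"
    have A: "Inl -` I \<subseteq> N" and B: "Inr -` I \<subseteq> {..<r}"
      using I(1) by auto
    have "finite I"
      using I(1) assms(1) by (simp add: finite_subset)
    then have "(\<Sum>a\<in>Inl -` I. u (Inl a)) + (\<Sum>i\<in>Inr -` I. u (Inr i)) = 0"
      using I(2) sum_split_Inl_Inr[of I u] by (simp add: comp_def)
    moreover have "(\<Sum>a\<in>Inl -` I. u (Inl a)) = (\<Sum>a\<in>Inl -` I. P a)"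
      using A assms(8) by (intro sum.cong) auto
    moreover have "(\<Sum>i\<in>Inr -` I. u (Inr i)) = - (\<Sum>i\<in>Inr -` I. ys i)"
      using B assms(9) by (simp add: sum_negf[symmetric] subset_iff)
    ultimately have "(\<Sum>a\<in>Inl -` I. P a) = (\<Sum>i\<in>Inr -` I. ys i)"
      by simp
    with A B have "(Inl -` I = {} \<and> Inr -` I = {}) \<or> (Inl -` I = N \<and> Inr -` I = {..<r})"
      by (rule no_vanishing_proper_subsum[OF assms(1-7)])
    then show "I = {} \<or> I = N <+> {..<r}"
      using Plus_vimage_Inl_Inr[of I] by auto
  qed
qed

theorem theorem4:
  fixes x :: "nat \<Rightarrow> nat \<Rightarrow> 'b \<Rightarrow> 'a::field" and n m r :: nat
  assumes "n \<ge> 2" and "m \<ge> 1" and "r \<le> n - 2"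
    and "\<forall>a\<in>{1..n}. \<forall>j\<in>{1..m}. x a j \<noteq> 0"
    and "\<forall>j\<in>{1..m}. vector_space.dim fscale (module.span fscale ((\<lambda>a. x a j) ` {1..n})) \<ge> 2"
    and "tensor_rank m (\<Sum>a\<in>{1..n}. prod_vec m (x a)) = r"
    and "\<forall>\<Gamma>. \<Gamma> \<subseteq> {1..n} \<and> r + 1 \<le> card \<Gamma> \<and> card \<Gamma> \<le> n - 1 \<longrightarrow>
           tensor_rank m (\<Sum>a\<in>\<Gamma>. prod_vec m (x a)) \<ge> r + 1"
  shows "n + r \<ge> m + 2"
proof -
  have products: "\<forall>a\<in>{1..n}. is_product_vector m (prod_vec m (x a))"
    using assms(4) unfolding is_product_vector_def by blast
  obtain ys where ys: "\<forall>i<r. is_product_vector m (ys i)" "(\<Sum>a\<in>{1..n}. prod_vec m (x a)) = (\<Sum>i<r. ys i)"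
    using sum_of_products_tensor_rank[OF sum_of_products_sum[OF _ products]] assms(6)
    unfolding sum_of_products_def by auto
  have "\<forall>i<r. \<exists>Y. (\<forall>k\<in>{1..m}. Y k \<noteq> 0) \<and> prod_vec m Y = - ys i"
    using is_product_vector_uminus[OF assms(2)] ys(1) unfolding is_product_vector_def by metis
  then obtain Y where Y: "\<forall>i<r. (\<forall>k\<in>{1..m}. Y i k \<noteq> 0) \<and> prod_vec m (Y i) = - ys i"
    by metis
  define S where "S = {1..n} <+> {..<r}"
  define Z where "Z = case_sum x Y"
  have "finite S" "Inl 1 \<in> S"
    using assms(1) by (auto simp: S_def)
  have connected: "span_connected S (\<lambda>i. prod_vec m (Z i))"
    unfolding S_def
    by (rule span_connected_signed_decomposition[OF _ _ products ys assms(6)]) (use assms Y in \<open>auto simp: Z_def\<close>)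
  have nonzero: "\<forall>i\<in>S. \<forall>k\<in>{1..m}. Z i k \<noteq> 0"
    using assms(4) Y by (auto simp: S_def Z_def)
  have zero_sum: "(\<Sum>i\<in>S. prod_vec m (Z i)) = 0"
    unfolding S_def by (rule sum_signed_decomposition_eq_0[OF _ ys(2)]) (use Y in \<open>auto simp: Z_def\<close>)
  have "nonparallel_factors m S Z = {1..m}"
    by (rule nonparallel_factors_eq_if_two_le_dim[where g = Inl and N = "{1..n}"])
      (use assms(5) in \<open>auto simp: S_def Z_def\<close>)
  then have "m < fs.dim ((\<lambda>i. prod_vec m (Z i)) ` S)"
    using card_nonparallel_factors_less_dim[OF \<open>finite S\<close> _ nonzero connected] \<open>Inl 1 \<in> S\<close> by auto
  moreover have "fs.dim ((\<lambda>i. prod_vec m (Z i)) ` S) < card S"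
    using dim_less_card_if_sum_eq_0[OF \<open>finite S\<close> \<open>Inl 1 \<in> S\<close> zero_sum] .
  moreover have "card S = n + r"
    by (simp add: S_def card_Plus)
  ultimately show ?thesis
    by linarith
qed

end
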